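(* Let $k$ be a non-negative integer, $a_0,\dots,a_k\in\mathbb{C}$, and suppose $\Lambda=\sum_{i=0}^{k}a_i(Dx)^iD$ is a lowering operator. Let $\{B_n\}_{n\ge0}$ be a monic polynomial sequence with dual sequence $\{u_n\}_{n\ge0}$, let $$B^{[1]}_n(x;\Lambda)=(n+1)^{-1}\Big(\sum_{i=0}^{k}a_i(n+1)^i\Big)^{-1}(\Lambda B_{n+1})(x),\quad n\ge0,$$ and let $\{u^{[1]}_n(\Lambda)\}_{n\ge0}$ be the dual sequence of $\{B^{[1]}_n(\cdot;\Lambda)\}_{n\ge0}$. Then for all $n\ge0$, $${}^t\Lambda\big(u^{[1]}_n(\Lambda)\big)=\rho_nu_{n+1},\qquad \rho_n=(n+1)\sum_{i=0}^{k}a_i(n+1)^i,$$ where ${}^t\Lambda=\sum_{i=0}^{k}a_i(-1)^{i+1}(Dx)^iD$ acting on forms.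
   Context: $\mathcal{P}$ is the space of complex polynomials, $\mathcal{P}'$ its algebraic dual, $\langle u,p\rangle$ the action of a form on a polynomial. $D$ is the derivative, $x$ multiplication by $x$, products are compositions. A lowering operator is a linear map $\mathcal{O}:\mathcal{P}\to\mathcal{P}$ with $\mathcal{O}(1)=0$ and $\deg\mathcal{O}(x^n)=n-1$, $n\ge1$. A monic polynomial sequence (MPS) is a sequence $\{B_n\}_{n\ge0}$ with $B_n$ monic of degree $n$; its dual sequence is the unique $\{u_n\}\subset\mathcal{P}'$ with $\langle u_n,B_m\rangle=\delta_{n,m}$. Transposes: $\langle {}^tT u,p\rangle=\langle u,Tp\rangle$; on forms $\langle Du,p\rangle=-\langle u,p'\rangle$ and $\langle xu,p\rangle=\langle u,xp\rangle$. *)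

theory Defs
  imports "HOL-Computational_Algebra.Polynomial"
begin

type_synonym form = "complex poly \<Rightarrow> complex"

definition lin_op :: "(complex poly \<Rightarrow> complex poly) \<Rightarrow> bool" where
  "lin_op T \<longleftrightarrow> (\<forall>p q. T (p + q) = T p + T q) \<and> (\<forall>c p. T (smult c p) = smult c (T p))"

definition lowering_op :: "(complex poly \<Rightarrow> complex poly) \<Rightarrow> bool" where
  "lowering_op T \<longleftrightarrow> lin_op T \<and> T 1 = 0 \<and>
     (\<forall>n\<ge>1. T (monom 1 n) \<noteq> 0 \<and> degree (T (monom 1 n)) = n - 1)"

definition is_form :: "form \<Rightarrow> bool" where
  "is_form u \<longleftrightarrow> (\<forall>p q. u (p + q) = u p + u q) \<and> (\<forall>c p. u (smult c p) = c * u p)"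

definition MPS :: "(nat \<Rightarrow> complex poly) \<Rightarrow> bool" where
  "MPS B \<longleftrightarrow> (\<forall>n. degree (B n) = n \<and> lead_coeff (B n) = 1)"

definition dual_seq :: "(nat \<Rightarrow> complex poly) \<Rightarrow> (nat \<Rightarrow> form) \<Rightarrow> bool" where
  "dual_seq B u \<longleftrightarrow> (\<forall>n. is_form (u n)) \<and> (\<forall>n m. u n (B m) = (if n = m then 1 else 0))"

definition polyD :: "complex poly \<Rightarrow> complex poly" where "polyD p = pderiv p"
definition polyX :: "complex poly \<Rightarrow> complex poly" where "polyX p = [:0, 1:] * p"

definition Lam :: "nat \<Rightarrow> (nat \<Rightarrow> complex) \<Rightarrow> complex poly \<Rightarrow> complex poly" where
  "Lam k a p = (\<Sum>i\<le>k. smult (a i) (((polyD \<circ> polyX) ^^ i) (polyD p)))"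

definition formD :: "form \<Rightarrow> form" where "formD u = (\<lambda>p. - u (pderiv p))"
definition formX :: "form \<Rightarrow> form" where "formX u = (\<lambda>p. u ([:0, 1:] * p))"

definition tLam :: "nat \<Rightarrow> (nat \<Rightarrow> complex) \<Rightarrow> form \<Rightarrow> form" where
  "tLam k a u = (\<lambda>p. \<Sum>i\<le>k. a i * (-1) ^ (i + 1) * (((formD \<circ> formX) ^^ i) (formD u)) p)"

definition B1 :: "nat \<Rightarrow> (nat \<Rightarrow> complex) \<Rightarrow> (nat \<Rightarrow> complex poly) \<Rightarrow> nat \<Rightarrow> complex poly" where
  "B1 k a B n = smult (inverse (of_nat (n + 1) * (\<Sum>i\<le>k. a i * of_nat (n + 1) ^ i)))
                      (Lam k a (B (n + 1)))"

end

theory Submission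
  imports Defs
begin

text \<open>
  Both sides are linear forms, so it suffices to compare them on the basis \<open>B\<^sub>m\<close>.
  The transpose satisfies \<open>\<langle>\<^sup>t\<Lambda> v, p\<rangle> = \<langle>v, \<Lambda> p\<rangle>\<close>, and \<open>\<Lambda>\<close> is diagonal on monomials,
  \<open>\<Lambda> x\<^sup>m\<^sup>+\<^sup>1 = \<rho>\<^sub>m x\<^sup>m\<close>; being a lowering operator forces \<open>\<rho>\<^sub>m \<noteq> 0\<close>, so
  \<open>\<Lambda> B\<^sub>m\<^sub>+\<^sub>1 = \<rho>\<^sub>m B\<^sup>[\<^sup>1\<^sup>]\<^sub>m\<close> and \<open>\<Lambda> B\<^sub>0 = 0\<close>. Duality then gives
  \<open>\<langle>u\<^sup>[\<^sup>1\<^sup>]\<^sub>n, \<Lambda> B\<^sub>m\<rangle> = \<rho>\<^sub>n \<delta>\<^sub>n\<^sub>+\<^sub>1\<^sub>,\<^sub>m = \<langle>\<rho>\<^sub>n u\<^sub>n\<^sub>+\<^sub>1, B\<^sub>m\<rangle>\<close>.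
\<close>

definition lowering_factor :: "nat \<Rightarrow> (nat \<Rightarrow> complex) \<Rightarrow> nat \<Rightarrow> complex" where
  "lowering_factor k a n = of_nat (n + 1) * (\<Sum>i\<le>k. a i * of_nat (n + 1) ^ i)"

lemma B1_eq: "B1 k a B n = smult (inverse (lowering_factor k a n)) (Lam k a (B (Suc n)))"
  by (simp add: B1_def lowering_factor_def)

lemma polyX_monom: "polyX (monom c n) = monom c (Suc n)"
  by (simp add: polyX_def monom_altdef mult.left_commute)

lemma DX_funpow_monom: "((polyD \<circ> polyX) ^^ i) (monom c n) = monom (c * of_nat (Suc n) ^ i) n"
  by (induction i) (simp_all add: polyX_monom polyD_def pderiv_monom mult_ac)

lemma Lam_monom_Suc:
  "Lam k a (monom c (Suc m)) = smult (lowering_factor k a m) (monom c m)"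
proof -
  have "Lam k a (monom c (Suc m)) =
          (\<Sum>i\<le>k. smult (a i * of_nat (m + 1) * of_nat (m + 1) ^ i) (monom c m))"
    unfolding Lam_def polyD_def pderiv_monom
    by (intro sum.cong refl) (simp add: DX_funpow_monom[unfolded polyD_def] smult_monom mult_ac)
  then show ?thesis
    by (simp add: lowering_factor_def smult_sum[symmetric] sum_distrib_left mult_ac)
qed

lemma lowering_factor_nonzero:
  assumes "lowering_op (Lam k a)"
  shows "lowering_factor k a m \<noteq> 0"
proof
  assume "lowering_factor k a m = 0"
  then have "Lam k a (monom 1 (Suc m)) = 0" by (simp add: Lam_monom_Suc)
  with assms show False unfolding lowering_op_def by auto
qed

lemma Lam_B_Suc:
  assumes "lowering_op (Lam k a)"
  shows "Lam k a (B (Suc m)) = smult (lowering_factor k a m) (B1 k a B m)"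
  using lowering_factor_nonzero[OF assms] by (simp add: B1_eq)

lemma form_zero: "is_form u \<Longrightarrow> u 0 = 0"
  unfolding is_form_def by (metis add_cancel_right_right add_0)

lemma form_sum:
  assumes "is_form u" and "finite A"
  shows "u (\<Sum>i\<in>A. f i) = (\<Sum>i\<in>A. u (f i))"
  using assms(2) by induction (use assms(1) form_zero in \<open>auto simp: is_form_def\<close>)

lemma is_form_comp_lin_op: "is_form u \<Longrightarrow> lin_op T \<Longrightarrow> is_form (u \<circ> T)"
  unfolding is_form_def lin_op_def by simp

lemma is_form_scale: "is_form u \<Longrightarrow> is_form (\<lambda>p. c * u p)"
  unfolding is_form_def by (simp add: algebra_simps)

lemma pderiv_XD_funpow: "pderiv (((polyX \<circ> polyD) ^^ i) p) = ((polyD \<circ> polyX) ^^ i) (pderiv p)"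
  by (induction i) (simp_all add: polyD_def)

lemma formDX_funpow: "(((formD \<circ> formX) ^^ i) v) p = (-1) ^ i * v (((polyX \<circ> polyD) ^^ i) p)"
proof (induction i arbitrary: p)
  case (Suc i)
  have "(((formD \<circ> formX) ^^ Suc i) v) p = - (((formD \<circ> formX) ^^ i) v) ((polyX \<circ> polyD) p)"
    by (simp add: formD_def formX_def polyX_def polyD_def)
  also have "\<dots> = (-1) ^ Suc i * v (((polyX \<circ> polyD) ^^ i) ((polyX \<circ> polyD) p))"
    by (subst Suc.IH) simp
  also have "\<dots> = (-1) ^ Suc i * v (((polyX \<circ> polyD) ^^ Suc i) p)"
    by (simp only: funpow_Suc_right o_apply)
  finally show ?case .
qed simp

lemma tLam_eq_comp_Lam:
  assumes "is_form u"
  shows "tLam k a u p = u (Lam k a p)"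
proof -
  have "a i * (-1) ^ (i + 1) * (((formD \<circ> formX) ^^ i) (formD u)) p =
        u (smult (a i) (((polyD \<circ> polyX) ^^ i) (polyD p)))" for i
  proof -
    have "((-1) ^ (i + 1) * (-1) ^ i * -1 :: complex) = 1"
      by (simp flip: power_add add: mult_2[symmetric])
    then show ?thesis
      using assms unfolding formDX_funpow
      by (simp add: is_form_def formD_def pderiv_XD_funpow polyD_def)
  qed
  then show ?thesis
    using assms by (simp add: tLam_def Lam_def form_sum)
qed

lemma form_eq_on_MPS:
  assumes f: "is_form f" and g: "is_form g" and "MPS B"
    and eq: "\<And>m. f (B m) = g (B m)"
  shows "f p = g p"
proof (induction "degree p" arbitrary: p rule: less_induct)
  case less
  define d where "d = degree p"
  define q where "q = p - smult (lead_coeff p) (B d)"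
  have Bd: "degree (B d) = d" "coeff (B d) d = 1" using \<open>MPS B\<close> unfolding MPS_def by metis+
  have "f q = g q"
  proof (cases "q = 0")
    case True then show ?thesis using form_zero[OF f] form_zero[OF g] by simp
  next
    case False
    have "degree q \<le> d"
      unfolding q_def using degree_smult_le[of _ "B d"] Bd(1)
      by (intro degree_diff_le) (simp_all add: d_def)
    moreover have "coeff q d = 0" using Bd(2) by (simp add: q_def d_def)
    ultimately have "degree q < degree p"
      using False leading_coeff_0_iff unfolding d_def by (metis le_neq_implies_less)
    then show ?thesis by (rule less)
  qed
  moreover have "p = q + smult (lead_coeff p) (B d)" by (simp add: q_def)
  ultimately show ?case using f g eq unfolding is_form_def by metis
qed

theorem proposition4:
  fixes k :: nat and a :: "nat \<Rightarrow> complex"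
    and B :: "nat \<Rightarrow> complex poly" and u u1 :: "nat \<Rightarrow> form"
  assumes "lowering_op (Lam k a)"
    and "MPS B"
    and "dual_seq B u"
    and "dual_seq (B1 k a B) u1"
  shows "\<forall>n. tLam k a (u1 n) =
              (\<lambda>p. (of_nat (n + 1) * (\<Sum>i\<le>k. a i * of_nat (n + 1) ^ i)) * u (Suc n) p)"
proof
  fix n
  let ?\<rho> = "lowering_factor k a n"
  have u1: "is_form (u1 n)" and u: "is_form (u (Suc n))"
    using assms(3,4) unfolding dual_seq_def by auto
  have Lam: "lin_op (Lam k a)" "Lam k a 1 = 0"
    using assms(1) unfolding lowering_op_def by auto
  have B0: "B 0 = 1"
    using assms(2) unfolding MPS_def by (metis degree_0_id lead_coeff_pCons(2) one_pCons)
  have on_basis: "(u1 n \<circ> Lam k a) (B m) = ?\<rho> * u (Suc n) (B m)" for m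
  proof (cases m)
    case 0
    have "u (Suc n) (B 0) = 0" using assms(3) by (simp add: dual_seq_def)
    then show ?thesis using 0 B0 Lam(2) form_zero[OF u1] by simp
  next
    case (Suc j)
    then show ?thesis using u1 assms(3,4) Lam_B_Suc[OF assms(1)]
      by (auto simp: is_form_def dual_seq_def)
  qed
  have "(u1 n \<circ> Lam k a) p = ?\<rho> * u (Suc n) p" for p
    using form_eq_on_MPS[OF is_form_comp_lin_op[OF u1 Lam(1)] is_form_scale[OF u] assms(2)]
      on_basis by blast
  then show "tLam k a (u1 n) = (\<lambda>p. (of_nat (n + 1) * (\<Sum>i\<le>k. a i * of_nat (n + 1) ^ i)) * u (Suc n) p)"
    by (simp add: fun_eq_iff tLam_eq_comp_Lam[OF u1] lowering_factor_def)
qed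

end
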